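(* Let $G$ be a finite simple undirected connected graph, and let $c:V(G)\to \mathbb{R}_{>0}$ and $\kappa:V(G)\to \mathbb{Z}$ be functions such that $0\leq \kappa(u)\leq d_G(u)$ for every vertex $u$ of $G$. Then $$\beta(G,c,\kappa) = \sum_{u\in V(G)} \frac{c(u)\big(d_G(u)-\kappa(u)\big)\big(d_G(u)-\kappa(u)+1\big)}{2(d_G(u)+1)}$$ holds if and only if one of the following holds: (i) $\kappa(u)=d_G(u)$ for every vertex $u$ of $G$; (ii) $c$ is constant on $V(G)$ and $\kappa(u)=0$ for every vertex $u$ of $G$; (iii) $G$ is a clique (complete graph), $c$ and $\kappa$ are constant on $V(G)$, and $0<\kappa(u)<d_G(u)$ for every vertex $u$ of $G$.
   Context: $d_G(u)$ denotes the degree of $u$ in $G$, and $[n]=\{1,\dots,n\}$. For a function $\lambda:V(G)\to\mathbb{Z}$, a set $I\subseteq V(G)$ is called $\lambda$-degenerate in $G$ if there is a linear ordering $u_1,\ldots,u_k$ of the vertices of $I$ such that for every $i\in[k]$, $u_i$ has at most $\lambda(u_i)$ neighbors in $\{u_j: j\in[i-1]\}$. Define $$\beta(G,c,\kappa)=\min\Big\{\sum_{u\in V(G)} c(u)\iota(u) : \iota:V(G)\to\mathbb{Z}_{\geq 0} \text{ and } V(G) \text{ is } (\kappa+\iota)\text{-degenerate in } G\Big\}.$$ (It is known that always $\beta(G,c,\kappa)$ is at most the right-hand side sum in the claim.) *)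

theory Defs
  imports Complex_Main
begin

definition simple_graph :: "'a set \<Rightarrow> ('a \<Rightarrow> 'a \<Rightarrow> bool) \<Rightarrow> bool" where
  "simple_graph V E \<longleftrightarrow> finite V \<and> (\<forall>u v. E u v \<longrightarrow> u \<in> V \<and> v \<in> V)
     \<and> (\<forall>u v. E u v \<longrightarrow> E v u) \<and> (\<forall>u. \<not> E u u)"

definition graph_connected :: "'a set \<Rightarrow> ('a \<Rightarrow> 'a \<Rightarrow> bool) \<Rightarrow> bool" where
  "graph_connected V E \<longleftrightarrow> (\<forall>u\<in>V. \<forall>v\<in>V. E\<^sup>*\<^sup>* u v)"

definition degree :: "'a set \<Rightarrow> ('a \<Rightarrow> 'a \<Rightarrow> bool) \<Rightarrow> 'a \<Rightarrow> nat" where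
  "degree V E u = card {v \<in> V. E u v}"

definition degenerate :: "('a \<Rightarrow> 'a \<Rightarrow> bool) \<Rightarrow> ('a \<Rightarrow> int) \<Rightarrow> 'a set \<Rightarrow> bool" where
  "degenerate E lam I \<longleftrightarrow> (\<exists>xs. distinct xs \<and> set xs = I \<and>
     (\<forall>i < length xs. int (card {v \<in> set (take i xs). E (xs ! i) v}) \<le> lam (xs ! i)))"

definition beta :: "'a set \<Rightarrow> ('a \<Rightarrow> 'a \<Rightarrow> bool) \<Rightarrow> ('a \<Rightarrow> real) \<Rightarrow> ('a \<Rightarrow> int) \<Rightarrow> real" where
  "beta V E c \<kappa> = Inf {(\<Sum>u\<in>V. c u * of_int (\<iota> u)) | \<iota>.
      (\<forall>u\<in>V. 0 \<le> \<iota> u) \<and> degenerate E (\<lambda>u. \<kappa> u + \<iota> u) V}"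

end

theory Submission
  imports Defs "HOL-Combinatorics.Multiset_Permutations"
begin

text \<open>Along a fixed ordering of V the cheapest admissible \<iota> is \<iota> u = max 0 (b u - \<kappa> u), where
  b u counts the neighbours of u that precede it; so \<beta> is the minimum of this cost over all
  orderings. In a uniformly random ordering the rank of u within its closed neighbourhood is
  uniform on {0..d(u)}, which makes the right-hand side the average cost. Hence equality holds
  iff all orderings cost the same. Exchanging two adjacent vertices u, v that directly follow
  an ordering of a set S changes the cost by
  c v [\<kappa> v \<le> |N(v) \<inter> S|] - c u [\<kappa> u \<le> |N(u) \<inter> S|]. Requiring this to vanish for
  all S and propagating along a connected graph leaves only the three listed cases, in each of
  which the cost is visibly independent of the ordering.\<close>

fun list_index :: "'a list \<Rightarrow> 'a \<Rightarrow> nat" where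
  "list_index [] x = 0"
| "list_index (y # ys) x = (if y = x then 0 else Suc (list_index ys x))"

lemma list_index_less: "x \<in> set xs \<Longrightarrow> list_index xs x < length xs"
  by (induction xs) auto

lemma nth_list_index: "x \<in> set xs \<Longrightarrow> xs ! list_index xs x = x"
  by (induction xs) auto

lemma inj_on_list_index: "inj_on (list_index xs) (set xs)"
  by (metis inj_onI nth_list_index)

lemma list_index_append:
  "list_index (xs @ ys) x = (if x \<in> set xs then list_index xs x else length xs + list_index ys x)"
  by (induction xs) auto

lemma list_index_map: "inj f \<Longrightarrow> list_index (map f xs) (f x) = list_index xs x"
  by (induction xs) (auto simp: inj_eq)

lemma simple_graphD:
  assumes "simple_graph V E"
  shows "finite V" and "E u v \<Longrightarrow> u \<in> V" and "E u v \<Longrightarrow> v \<in> V"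
    and "E u v \<Longrightarrow> E v u" and "\<not> E u u"
  using assms unfolding simple_graph_def by blast+

definition back_degree :: "('a \<Rightarrow> 'a \<Rightarrow> bool) \<Rightarrow> 'a list \<Rightarrow> 'a \<Rightarrow> nat" where
  "back_degree E xs u = card {v \<in> set xs. E u v \<and> list_index xs v < list_index xs u}"

lemma back_degree_append_Cons:
  assumes "distinct (p @ u # q)"
  shows "back_degree E (p @ u # q) u = card {v \<in> set p. E u v}"
proof -
  have "list_index (p @ u # q) v < list_index (p @ u # q) u \<longleftrightarrow> v \<in> set p"
    if "v \<in> set (p @ u # q)" for v
    using assms that by (auto simp: list_index_append list_index_less)
  then have "{v \<in> set (p @ u # q). E u v \<and> list_index (p @ u # q) v < list_index (p @ u # q) u}
      = {v \<in> set p. E u v}"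
    by auto
  then show ?thesis
    by (simp add: back_degree_def)
qed

lemma back_degree_nth:
  assumes "distinct xs" "i < length xs"
  shows "back_degree E xs (xs ! i) = card {v \<in> set (take i xs). E (xs ! i) v}"
  using back_degree_append_Cons[of "take i xs" "xs ! i" "drop (Suc i) xs" E] assms
  by (simp add: id_take_nth_drop[symmetric])

lemma back_degree_le_degree:
  assumes "finite V" "set xs \<subseteq> V"
  shows "back_degree E xs u \<le> degree V E u"
  unfolding back_degree_def degree_def using assms by (intro card_mono) auto

lemma degenerate_iff_back_degree:
  "degenerate E lam V \<longleftrightarrow>
     (\<exists>xs\<in>permutations_of_set V. \<forall>u\<in>V. int (back_degree E xs u) \<le> lam u)"
proof -
  have "(\<forall>i < length xs. int (card {v \<in> set (take i xs). E (xs ! i) v}) \<le> lam (xs ! i))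
      \<longleftrightarrow> (\<forall>u\<in>set xs. int (back_degree E xs u) \<le> lam u)" if "distinct xs" for xs
    using that by (simp add: all_set_conv_all_nth back_degree_nth)
  then show ?thesis
    unfolding degenerate_def permutations_of_set_def by auto
qed

definition ordering_cost ::
    "'a set \<Rightarrow> ('a \<Rightarrow> 'a \<Rightarrow> bool) \<Rightarrow> ('a \<Rightarrow> real) \<Rightarrow> ('a \<Rightarrow> int) \<Rightarrow> 'a list \<Rightarrow> real" where
  "ordering_cost V E c \<kappa> xs = (\<Sum>u\<in>V. c u * max 0 (real (back_degree E xs u) - of_int (\<kappa> u)))"

lemma ordering_cost_attained:
  assumes "xs \<in> permutations_of_set V"
  obtains \<iota> where "\<forall>u\<in>V. 0 \<le> \<iota> u" "degenerate E (\<lambda>u. \<kappa> u + \<iota> u) V"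
    "ordering_cost V E c \<kappa> xs = (\<Sum>u\<in>V. c u * of_int (\<iota> u))"
proof
  define \<iota> where "\<iota> u = max 0 (int (back_degree E xs u) - \<kappa> u)" for u
  show "\<forall>u\<in>V. 0 \<le> \<iota> u"
    unfolding \<iota>_def by simp
  show "degenerate E (\<lambda>u. \<kappa> u + \<iota> u) V"
    unfolding degenerate_iff_back_degree \<iota>_def using assms by (intro bexI[of _ xs]) auto
  show "ordering_cost V E c \<kappa> xs = (\<Sum>u\<in>V. c u * of_int (\<iota> u))"
    unfolding ordering_cost_def \<iota>_def by (simp add: of_int_max)
qed

lemma ordering_cost_le:
  assumes "\<forall>u\<in>V. 0 \<le> c u" "\<forall>u\<in>V. 0 \<le> \<iota> u" "degenerate E (\<lambda>u. \<kappa> u + \<iota> u) V"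
  shows "\<exists>xs\<in>permutations_of_set V. ordering_cost V E c \<kappa> xs \<le> (\<Sum>u\<in>V. c u * of_int (\<iota> u))"
proof -
  obtain xs where "xs \<in> permutations_of_set V" and "\<forall>u\<in>V. int (back_degree E xs u) \<le> \<kappa> u + \<iota> u"
    using assms(3) unfolding degenerate_iff_back_degree by blast
  moreover have "ordering_cost V E c \<kappa> xs \<le> (\<Sum>u\<in>V. c u * of_int (\<iota> u))"
    unfolding ordering_cost_def using calculation(2) assms(1,2)
    by (intro sum_mono mult_left_mono) auto
  ultimately show ?thesis
    by blast
qed

lemma beta_eq_Min_ordering_cost:
  assumes "finite V" "\<forall>u\<in>V. 0 \<le> c u"
  shows "beta V E c \<kappa> = Min (ordering_cost V E c \<kappa> ` permutations_of_set V)"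
proof -
  let ?S = "{(\<Sum>u\<in>V. c u * of_int (\<iota> u)) | \<iota>.
      (\<forall>u\<in>V. 0 \<le> \<iota> u) \<and> degenerate E (\<lambda>u. \<kappa> u + \<iota> u) V}"
  let ?P = "permutations_of_set V"
  let ?f = "ordering_cost V E c \<kappa>"
  have P: "finite ?P" "?P \<noteq> {}"
    using \<open>finite V\<close> by auto
  show ?thesis
    unfolding beta_def
  proof (rule cInf_eq_minimum)
    have "Min (?f ` ?P) \<in> ?f ` ?P"
      using P by (intro Min_in) auto
    then obtain xs where "xs \<in> ?P" "Min (?f ` ?P) = ?f xs"
      by blast
    moreover obtain \<iota> where "\<forall>u\<in>V. 0 \<le> \<iota> u" "degenerate E (\<lambda>u. \<kappa> u + \<iota> u) V"
      "?f xs = (\<Sum>u\<in>V. c u * of_int (\<iota> u))"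
      using ordering_cost_attained[OF \<open>xs \<in> ?P\<close>] .
    ultimately show "Min (?f ` ?P) \<in> ?S"
      by auto
  next
    fix s assume "s \<in> ?S"
    then obtain \<iota> where "s = (\<Sum>u\<in>V. c u * of_int (\<iota> u))" "\<forall>u\<in>V. 0 \<le> \<iota> u"
      "degenerate E (\<lambda>u. \<kappa> u + \<iota> u) V"
      by blast
    then obtain xs where "xs \<in> ?P" "?f xs \<le> s"
      using ordering_cost_le[OF assms(2)] by blast
    then show "Min (?f ` ?P) \<le> s"
      using P by (meson Min_le finite_imageI image_eqI order_trans)
  qed
qed

lemma bij_betw_rank:
  fixes f :: "'a \<Rightarrow> 'b::linorder"
  assumes "finite M" "inj_on f M"
  shows "bij_betw (\<lambda>w. card {v\<in>M. f v < f w}) M {..<card M}"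
proof -
  let ?r = "\<lambda>w. card {v\<in>M. f v < f w}"
  have mono: "?r x < ?r y" if "x \<in> M" "y \<in> M" "f x < f y" for x y
    using that \<open>finite M\<close> by (intro psubset_card_mono) auto
  have inj: "inj_on ?r M"
  proof (rule inj_onI)
    fix x y assume "x \<in> M" "y \<in> M" "?r x = ?r y"
    then show "x = y"
      using mono[of x y] mono[of y x] inj_on_eq_iff[OF \<open>inj_on f M\<close>]
      by (cases "f x" "f y" rule: linorder_cases) auto
  qed
  have "?r w < card M" if "w \<in> M" for w
    using that \<open>finite M\<close> by (intro psubset_card_mono) auto
  then have "?r ` M \<subseteq> {..<card M}"
    by auto
  moreover have "card (?r ` M) = card {..<card M}"
    using inj by (simp add: card_image)
  ultimately have "?r ` M = {..<card M}"
    by (intro card_subset_eq) auto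
  with inj show ?thesis
    by (simp add: bij_betw_def)
qed

lemma sum_rank:
  fixes f :: "'a \<Rightarrow> 'b::linorder"
  assumes "finite M" "inj_on f M"
  shows "(\<Sum>w\<in>M. g (card {v\<in>M. f v < f w})) = (\<Sum>j<card M. g j)"
  using sum.reindex_bij_betw[OF bij_betw_rank[OF assms]] .

text \<open>The transposition of u and w permutes the orderings of V and exchanges the ranks of u and w.\<close>
lemma sum_permutations_of_set_rank_eq:
  assumes "M \<subseteq> V" "u \<in> M" "w \<in> M"
  shows "(\<Sum>xs\<in>permutations_of_set V. g (card {v\<in>M. list_index xs v < list_index xs u}))
       = (\<Sum>xs\<in>permutations_of_set V. g (card {v\<in>M. list_index xs v < list_index xs w}))"
proof -
  let ?P = "permutations_of_set V"
  define \<pi> where "\<pi> = transpose u w"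
  have "\<pi> permutes V"
    unfolding \<pi>_def using assms by (intro permutes_swap_id) auto
  then have P: "map \<pi> ` ?P = ?P"
    by (rule permutations_of_set_image_permutes)
  have "inj (map \<pi>)"
    by (simp add: \<pi>_def)
  have index: "list_index (map \<pi> xs) v = list_index xs (\<pi> v)" for xs v
    using list_index_map[of \<pi> xs "\<pi> v"] by (simp add: \<pi>_def)
  have "{v\<in>M. list_index (map \<pi> xs) v < list_index (map \<pi> xs) u}
      = \<pi> ` {v\<in>M. list_index xs v < list_index xs w}" for xs
  proof -
    have "\<pi> v \<in> M \<longleftrightarrow> v \<in> M" for v
      using \<open>u \<in> M\<close> \<open>w \<in> M\<close> by (auto simp: \<pi>_def transpose_def)
    moreover have "bij \<pi>" "inv \<pi> = \<pi>" "\<pi> u = w"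
      by (simp_all add: \<pi>_def bij_transpose)
    ultimately show ?thesis
      by (simp add: bij_image_Collect_eq index)
  qed
  then have rank: "card {v\<in>M. list_index (map \<pi> xs) v < list_index (map \<pi> xs) u}
      = card {v\<in>M. list_index xs v < list_index xs w}" for xs
    by (simp add: card_image \<pi>_def inj_on_subset[OF inj_transpose])
  show ?thesis
    using P inj_on_subset[OF \<open>inj (map \<pi>)\<close> subset_UNIV]
    by (intro sum.reindex_cong[where l = "map \<pi>"]) (auto simp: rank)
qed

lemma sum_permutations_of_set_rank:
  fixes g :: "nat \<Rightarrow> 'b::{comm_semiring_1,semiring_char_0}"
  assumes "finite V" "M \<subseteq> V" "u \<in> M"
  shows "of_nat (card M) * (\<Sum>xs\<in>permutations_of_set V. g (card {v\<in>M. list_index xs v < list_index xs u}))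
       = fact (card V) * (\<Sum>j<card M. g j)"
proof -
  let ?P = "permutations_of_set V"
  let ?rank = "\<lambda>xs w. card {v\<in>M. list_index xs v < list_index xs w}"
  have "finite M"
    using assms finite_subset by blast
  have "(\<Sum>w\<in>M. \<Sum>xs\<in>?P. g (?rank xs w)) = (\<Sum>w\<in>M. \<Sum>xs\<in>?P. g (?rank xs u))"
    using sum_permutations_of_set_rank_eq[OF \<open>M \<subseteq> V\<close> _ \<open>u \<in> M\<close>]
    by (rule sum.cong[OF refl]) auto
  then have "of_nat (card M) * (\<Sum>xs\<in>?P. g (?rank xs u)) = (\<Sum>w\<in>M. \<Sum>xs\<in>?P. g (?rank xs w))"
    by simp
  also have "\<dots> = (\<Sum>xs\<in>?P. \<Sum>w\<in>M. g (?rank xs w))"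
    by (rule sum.swap)
  also have "\<dots> = (\<Sum>xs\<in>?P. \<Sum>j<card M. g j)"
  proof (rule sum.cong[OF refl])
    fix xs assume "xs \<in> ?P"
    then have "inj_on (list_index xs) M"
      using \<open>M \<subseteq> V\<close> inj_on_list_index inj_on_subset
      by (metis permutations_of_setD(1))
    then show "(\<Sum>w\<in>M. g (?rank xs w)) = (\<Sum>j<card M. g j)"
      by (rule sum_rank[OF \<open>finite M\<close>])
  qed
  also have "\<dots> = fact (card V) * (\<Sum>j<card M. g j)"
    using \<open>finite V\<close> by (simp add: of_nat_fact)
  finally show ?thesis .
qed

lemma sum_permutations_of_set_back_degree:
  fixes g :: "nat \<Rightarrow> 'b::{comm_semiring_1,semiring_char_0}"
  assumes "simple_graph V E" "u \<in> V"
  shows "of_nat (degree V E u + 1) * (\<Sum>xs\<in>permutations_of_set V. g (back_degree E xs u))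
       = fact (card V) * (\<Sum>j<degree V E u + 1. g j)"
proof -
  define M where "M = insert u {v\<in>V. E u v}"
  have "finite V" "\<not> E u u"
    using simple_graphD[OF assms(1)] by auto
  then have "card M = degree V E u + 1"
    by (simp add: M_def degree_def)
  moreover have "back_degree E xs u = card {v\<in>M. list_index xs v < list_index xs u}"
    if "xs \<in> permutations_of_set V" for xs
  proof -
    have "{v \<in> set xs. E u v \<and> list_index xs v < list_index xs u}
        = {v\<in>M. list_index xs v < list_index xs u}"
      using that by (auto simp: M_def permutations_of_set_def)
    then show ?thesis
      by (simp add: back_degree_def)
  qed
  moreover have "M \<subseteq> V" "u \<in> M"
    using \<open>u \<in> V\<close> by (auto simp: M_def)
  ultimately show ?thesis
    using sum_permutations_of_set_rank[OF \<open>finite V\<close>, of M u g] by simp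
qed

lemma sum_max_0_diff:
  "(\<Sum>j<Suc d. max 0 (real j - real m)) = real (d - m) * (real (d - m) + 1) / 2"
proof (induction d)
  case 0
  then show ?case by simp
next
  case (Suc d)
  consider "m \<le> d" | "Suc d \<le> m"
    by linarith
  then show ?case
  proof cases
    case 1
    then have "real (Suc d - m) = real (d - m) + 1"
      by (simp add: Suc_diff_le)
    with 1 Suc show ?thesis
      by (simp add: field_simps)
  next
    case 2
    then show ?thesis
      using Suc by simp
  qed
qed

lemma sum_permutations_of_set_ordering_cost:
  assumes "simple_graph V E" and bounds: "\<forall>u\<in>V. 0 \<le> \<kappa> u \<and> \<kappa> u \<le> int (degree V E u)"
  shows "(\<Sum>xs\<in>permutations_of_set V. ordering_cost V E c \<kappa> xs) = fact (card V) *
      (\<Sum>u\<in>V. c u * of_int (int (degree V E u) - \<kappa> u) * of_int (int (degree V E u) - \<kappa> u + 1)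
               / (2 * (real (degree V E u) + 1)))"
proof -
  let ?P = "permutations_of_set V"
  have per_vertex: "(\<Sum>xs\<in>?P. max 0 (real (back_degree E xs u) - of_int (\<kappa> u)))
      = fact (card V) * (of_int (int (degree V E u) - \<kappa> u) * of_int (int (degree V E u) - \<kappa> u + 1)
          / (2 * (real (degree V E u) + 1)))" if "u \<in> V" for u
  proof -
    let ?d = "degree V E u"
    obtain m where m: "\<kappa> u = int m" "m \<le> ?d"
      using bounds \<open>u \<in> V\<close> by (metis nat_0_le nat_le_iff)
    let ?S = "\<Sum>xs\<in>?P. max 0 (real (back_degree E xs u) - real m)"
    have "real (?d + 1) * ?S = fact (card V) * (\<Sum>j<Suc ?d. max 0 (real j - real m))"
      using sum_permutations_of_set_back_degree[OF assms(1) \<open>u \<in> V\<close>,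
          of "\<lambda>j. max 0 (real j - real m)"]
      by simp
    also have "\<dots> = fact (card V) * (real (?d - m) * (real (?d - m) + 1) / 2)"
      by (simp only: sum_max_0_diff)
    finally have "?S = fact (card V) * (real (?d - m) * (real (?d - m) + 1) / 2) / real (?d + 1)"
      by (simp add: field_simps)
    then show ?thesis
      using m by (simp add: of_nat_diff)
  qed
  have "(\<Sum>xs\<in>?P. ordering_cost V E c \<kappa> xs)
      = (\<Sum>u\<in>V. c u * (\<Sum>xs\<in>?P. max 0 (real (back_degree E xs u) - of_int (\<kappa> u))))"
    unfolding ordering_cost_def by (simp add: sum.swap[of _ ?P] sum_distrib_left)
  then show ?thesis
    by (simp add: per_vertex sum_distrib_left mult_ac)
qed

lemma Min_image_eq_iff_constant:
  fixes f :: "'b \<Rightarrow> 'c::linordered_idom"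
  assumes "finite P" "P \<noteq> {}" and sum: "sum f P = of_nat (card P) * a"
  shows "Min (f ` P) = a \<longleftrightarrow> (\<forall>x\<in>P. \<forall>y\<in>P. f x = f y)"
proof
  assume "Min (f ` P) = a"
  then have "\<forall>x\<in>P. 0 \<le> f x - a"
    using Min_le[of "f ` P"] \<open>finite P\<close> by auto
  moreover have "(\<Sum>x\<in>P. f x - a) = 0"
    using sum by (simp add: sum_subtractf)
  ultimately have "\<forall>x\<in>P. f x - a = 0"
    using sum_nonneg_eq_0_iff[OF \<open>finite P\<close>, of "\<lambda>x. f x - a"] by blast
  then show "\<forall>x\<in>P. \<forall>y\<in>P. f x = f y"
    by simp
next
  assume const: "\<forall>x\<in>P. \<forall>y\<in>P. f x = f y"
  obtain x0 where "x0 \<in> P"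
    using \<open>P \<noteq> {}\<close> by blast
  then have "f ` P = {f x0}"
    using const by blast
  moreover have "sum f P = (\<Sum>x\<in>P. f x0)"
    using const \<open>x0 \<in> P\<close> by (intro sum.cong refl) blast
  moreover have "card P \<noteq> 0"
    using assms(1,2) by simp
  ultimately show "Min (f ` P) = a"
    using sum by simp
qed

lemma beta_eq_iff_ordering_cost_constant:
  assumes "simple_graph V E" "\<forall>u\<in>V. 0 < c u"
    and "\<forall>u\<in>V. 0 \<le> \<kappa> u \<and> \<kappa> u \<le> int (degree V E u)"
  shows "beta V E c \<kappa> =
      (\<Sum>u\<in>V. c u * of_int (int (degree V E u) - \<kappa> u) * of_int (int (degree V E u) - \<kappa> u + 1)
               / (2 * (real (degree V E u) + 1)))
    \<longleftrightarrow> (\<forall>xs\<in>permutations_of_set V. \<forall>ys\<in>permutations_of_set V.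
          ordering_cost V E c \<kappa> xs = ordering_cost V E c \<kappa> ys)"
proof -
  let ?P = "permutations_of_set V"
  have "finite V"
    by (rule simple_graphD(1)[OF assms(1)])
  have beta: "beta V E c \<kappa> = Min (ordering_cost V E c \<kappa> ` ?P)"
    using beta_eq_Min_ordering_cost[OF \<open>finite V\<close>] assms(2) by (simp add: less_imp_le)
  have sum: "sum (ordering_cost V E c \<kappa>) ?P = of_nat (card ?P) *
      (\<Sum>u\<in>V. c u * of_int (int (degree V E u) - \<kappa> u) * of_int (int (degree V E u) - \<kappa> u + 1)
               / (2 * (real (degree V E u) + 1)))"
    using sum_permutations_of_set_ordering_cost[OF assms(1,3)] \<open>finite V\<close> by simp
  show ?thesis
    unfolding beta using \<open>finite V\<close> by (intro Min_image_eq_iff_constant sum) auto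
qed

lemma back_degree_swap_adjacent:
  assumes "distinct (s @ u # v # r)" "w \<in> set s \<union> set r"
  shows "back_degree E (s @ u # v # r) w = back_degree E (s @ v # u # r) w"
proof (cases "w \<in> set s")
  case True
  then obtain s1 s2 where s: "s = s1 @ w # s2"
    by (meson split_list)
  have "back_degree E (s1 @ w # (s2 @ u # v # r)) w = card {x \<in> set s1. E w x}"
    using assms(1) s by (intro back_degree_append_Cons) simp
  also have "\<dots> = back_degree E (s1 @ w # (s2 @ v # u # r)) w"
    using assms(1) s by (intro back_degree_append_Cons[symmetric]) auto
  finally show ?thesis
    unfolding s by simp
next
  case False
  then obtain r1 r2 where r: "r = r1 @ w # r2"
    using assms(2) by (meson Un_iff split_list)
  have "distinct ((s @ u # v # r1) @ w # r2)" "distinct ((s @ v # u # r1) @ w # r2)"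
    using assms(1) unfolding r by auto
  then have "back_degree E ((s @ u # v # r1) @ w # r2) w = back_degree E ((s @ v # u # r1) @ w # r2) w"
    by (simp only: back_degree_append_Cons) (simp add: insert_commute)
  then show ?thesis
    unfolding r by simp
qed

lemma back_degree_after_neighbour:
  assumes "distinct (s @ u # v # r)" "E v u"
  shows "back_degree E (s @ u # v # r) v = Suc (card {w\<in>set s. E v w})"
proof -
  have "{w \<in> set (s @ [u]). E v w} = insert u {w\<in>set s. E v w}"
    using \<open>E v u\<close> by auto
  then have "back_degree E ((s @ [u]) @ v # r) v = card (insert u {w\<in>set s. E v w})"
    using back_degree_append_Cons[of "s @ [u]" v r E] assms(1) by simp
  then show ?thesis
    using assms(1) by simp
qed

lemma max_0_Suc_diff:
  "max 0 (real (Suc n) - of_int k) = max 0 (real n - of_int k) + of_bool (k \<le> int n)"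
  by auto

text \<open>Only the back degrees of u and v change, each by one.\<close>
lemma ordering_cost_swap_adjacent:
  assumes "distinct (s @ u # v # r)" "set (s @ u # v # r) = V" "E u v" "E v u"
  shows "ordering_cost V E c \<kappa> (s @ u # v # r) + c u * of_bool (\<kappa> u \<le> int (card {w\<in>set s. E u w}))
       = ordering_cost V E c \<kappa> (s @ v # u # r) + c v * of_bool (\<kappa> v \<le> int (card {w\<in>set s. E v w}))"
proof -
  let ?xs = "s @ u # v # r" and ?ys = "s @ v # u # r"
  let ?f = "\<lambda>xs w. c w * max 0 (real (back_degree E xs w) - of_int (\<kappa> w))"
  have "u \<noteq> v" "distinct ?ys"
    using assms(1) by auto
  have "finite V" "u \<in> V" "v \<in> V"
    using assms(2) by auto
  have "back_degree E ?xs u = card {w\<in>set s. E u w}"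
    "back_degree E ?ys v = card {w\<in>set s. E v w}"
    using assms(1) \<open>distinct ?ys\<close> by (simp_all add: back_degree_append_Cons)
  moreover have "back_degree E ?xs v = Suc (card {w\<in>set s. E v w})"
    using assms(1,4) by (rule back_degree_after_neighbour)
  moreover have "back_degree E ?ys u = Suc (card {w\<in>set s. E u w})"
    using \<open>distinct ?ys\<close> assms(3) by (rule back_degree_after_neighbour)
  moreover have "sum (?f ?xs) (V - {u, v}) = sum (?f ?ys) (V - {u, v})"
    using back_degree_swap_adjacent[OF assms(1)] assms(2) by (intro sum.cong) auto
  moreover have "ordering_cost V E c \<kappa> xs = ?f xs u + (?f xs v + sum (?f xs) (V - {u, v}))" for xs
  proof -
    have "sum (?f xs) V = ?f xs u + sum (?f xs) (V - {u})"
      using \<open>finite V\<close> \<open>u \<in> V\<close> by (rule sum.remove)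
    also have "sum (?f xs) (V - {u}) = ?f xs v + sum (?f xs) (V - {u} - {v})"
      using \<open>finite V\<close> \<open>v \<in> V\<close> \<open>u \<noteq> v\<close> by (intro sum.remove) auto
    finally show ?thesis
      unfolding ordering_cost_def by (simp add: Diff_insert2[symmetric])
  qed
  ultimately show ?thesis
    by (simp add: max_0_Suc_diff algebra_simps)
qed

text \<open>For positive c, this says that the cost change computed in ordering_cost_swap_adjacent
  vanishes for every S.\<close>
definition swap_stable :: "'a set \<Rightarrow> ('a \<Rightarrow> 'a \<Rightarrow> bool) \<Rightarrow> ('a \<Rightarrow> real) \<Rightarrow> ('a \<Rightarrow> int) \<Rightarrow> bool" where
  "swap_stable V E c \<kappa> \<longleftrightarrow> (\<forall>u v S. E u v \<and> S \<subseteq> V - {u, v} \<longrightarrow>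
     (\<kappa> u \<le> int (card {w\<in>S. E u w}) \<longleftrightarrow> \<kappa> v \<le> int (card {w\<in>S. E v w})) \<and>
     (\<kappa> u \<le> int (card {w\<in>S. E u w}) \<longrightarrow> c u = c v))"

lemma swap_stableD:
  assumes "swap_stable V E c \<kappa>" "E u v" "S \<subseteq> V - {u, v}"
  shows "\<kappa> u \<le> int (card {w\<in>S. E u w}) \<longleftrightarrow> \<kappa> v \<le> int (card {w\<in>S. E v w})"
    and "\<kappa> u \<le> int (card {w\<in>S. E u w}) \<Longrightarrow> c u = c v"
  using assms unfolding swap_stable_def by blast+

lemma swap_stable_if_ordering_cost_constant:
  assumes "simple_graph V E" "\<forall>u\<in>V. 0 < c u"
    and const: "\<forall>xs\<in>permutations_of_set V. \<forall>ys\<in>permutations_of_set V.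
      ordering_cost V E c \<kappa> xs = ordering_cost V E c \<kappa> ys"
  shows "swap_stable V E c \<kappa>"
  unfolding swap_stable_def
proof (intro allI impI)
  fix u v S
  assume uvS: "E u v \<and> S \<subseteq> V - {u, v}"
  then have "u \<in> V" "v \<in> V" "u \<noteq> v" "E v u" "finite V"
    using simple_graphD[OF assms(1)] by blast+
  obtain s where s: "distinct s" "set s = S"
    using finite_distinct_list[of S] uvS \<open>finite V\<close> finite_subset by blast
  obtain r where r: "distinct r" "set r = V - S - {u, v}"
    using finite_distinct_list[of "V - S - {u, v}"] \<open>finite V\<close> by blast
  have xs: "distinct (s @ u # v # r)" "set (s @ u # v # r) = V"
    using s r uvS \<open>u \<in> V\<close> \<open>v \<in> V\<close> \<open>u \<noteq> v\<close> by auto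
  then have "s @ u # v # r \<in> permutations_of_set V" "s @ v # u # r \<in> permutations_of_set V"
    by (auto simp: permutations_of_set_def)
  then have "ordering_cost V E c \<kappa> (s @ u # v # r) = ordering_cost V E c \<kappa> (s @ v # u # r)"
    using const by blast
  moreover note ordering_cost_swap_adjacent[OF xs conjunct1[OF uvS] \<open>E v u\<close>, of c \<kappa>]
  ultimately have "c u * of_bool (\<kappa> u \<le> int (card {w\<in>S. E u w}))
      = c v * of_bool (\<kappa> v \<le> int (card {w\<in>S. E v w}))"
    unfolding s(2) by linarith
  moreover have "0 < c u" "0 < c v"
    using assms(2) \<open>u \<in> V\<close> \<open>v \<in> V\<close> by auto
  ultimately show "(\<kappa> u \<le> int (card {w\<in>S. E u w}) \<longleftrightarrow> \<kappa> v \<le> int (card {w\<in>S. E v w})) \<and>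
     (\<kappa> u \<le> int (card {w\<in>S. E u w}) \<longrightarrow> c u = c v)"
    by (cases "\<kappa> u \<le> int (card {w\<in>S. E u w})"; cases "\<kappa> v \<le> int (card {w\<in>S. E v w})") auto
qed

lemma graph_connected_propagate:
  assumes "simple_graph V E" "graph_connected V E" "r \<in> V" "P r"
    and preserved: "\<And>y z. y \<in> V \<Longrightarrow> z \<in> V \<Longrightarrow> E y z \<Longrightarrow> P y \<Longrightarrow> P z"
    and "w \<in> V"
  shows "P w"
proof -
  have "E\<^sup>*\<^sup>* r w"
    using assms(2-3,6) by (simp add: graph_connected_def)
  then show ?thesis
  proof (induction rule: rtranclp_induct)
    case base
    show ?case using \<open>P r\<close> .
  next
    case (step y z)
    then show ?case
      using simple_graphD(2,3)[OF assms(1)] by (blast intro: preserved)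
  qed
qed

lemma card_neighbours_remove_edge:
  assumes "simple_graph V E" "E y z"
  shows "int (card {w\<in>V - {y, z}. E y w}) = int (degree V E y) - 1"
proof -
  have "finite V" "\<not> E y y" "z \<in> V"
    using simple_graphD[OF assms(1)] assms(2) by blast+
  then have "{w\<in>V - {y, z}. E y w} = {w\<in>V. E y w} - {z}" "z \<in> {w\<in>V. E y w}"
    using assms(2) by auto
  moreover have "1 \<le> card {w\<in>V. E y w}"
    using \<open>finite V\<close> \<open>z \<in> {w\<in>V. E y w}\<close> by (auto simp: Suc_le_eq card_gt_0_iff)
  ultimately show ?thesis
    using \<open>finite V\<close> by (simp add: degree_def card_Diff_singleton of_nat_diff)
qed

lemma swap_stable_kappa_zero:
  assumes "simple_graph V E" "graph_connected V E" "swap_stable V E c \<kappa>"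
    and "\<forall>u\<in>V. 0 \<le> \<kappa> u" "u0 \<in> V" "\<kappa> u0 = 0" "u \<in> V"
  shows "\<kappa> u = 0 \<and> c u = c u0"
proof (rule graph_connected_propagate[OF assms(1,2,5) _ _ \<open>u \<in> V\<close>])
  fix y z assume "y \<in> V" "z \<in> V" "E y z" "\<kappa> y = 0 \<and> c y = c u0"
  then show "\<kappa> z = 0 \<and> c z = c u0"
    using swap_stableD[OF assms(3) \<open>E y z\<close>, of "{}"] assms(4) by force
qed (use assms(6) in simp)

lemma swap_stable_kappa_less_degree:
  assumes "simple_graph V E" "graph_connected V E" "swap_stable V E c \<kappa>"
    and "u0 \<in> V" "\<kappa> u0 < int (degree V E u0)" "u \<in> V"
  shows "\<kappa> u < int (degree V E u) \<and> c u = c u0"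
proof (rule graph_connected_propagate[OF assms(1,2,4) _ _ \<open>u \<in> V\<close>])
  fix y z assume "y \<in> V" "z \<in> V" "E y z" and y: "\<kappa> y < int (degree V E y) \<and> c y = c u0"
  from \<open>E y z\<close> have "E z y"
    by (rule simple_graphD(4)[OF assms(1)])
  have "V - {z, y} = V - {y, z}"
    by auto
  then show "\<kappa> z < int (degree V E z) \<and> c z = c u0"
    using swap_stableD[OF assms(3) \<open>E y z\<close> order_refl] y
      card_neighbours_remove_edge[OF assms(1) \<open>E y z\<close>]
      card_neighbours_remove_edge[OF assms(1) \<open>E z y\<close>]
    by auto
qed (use assms(5) in simp)

text \<open>Let T be a set of \<kappa> y neighbours of y other than z with a \<in> T. The threshold \<kappa> y is met
  on T but not on T - {a}; by swap stability the same holds for z, which forces E z a.\<close>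
lemma swap_stable_common_neighbour:
  assumes "simple_graph V E" "swap_stable V E c \<kappa>" "E y z" "E y a" "a \<noteq> z"
    and "1 \<le> \<kappa> y" "\<kappa> y < int (degree V E y)"
  shows "E z a \<and> \<kappa> z \<le> \<kappa> y"
proof -
  define N where "N = {w\<in>V - {y, z}. E y w}"
  obtain k where k: "\<kappa> y = int (Suc k)"
  proof
    show "\<kappa> y = int (Suc (nat (\<kappa> y) - 1))"
      using \<open>1 \<le> \<kappa> y\<close> by simp
  qed
  have "finite N" "a \<in> N"
    using simple_graphD[OF assms(1)] assms(3-5) by (auto simp: N_def)
  moreover have "int (card N) = int (degree V E y) - 1"
    unfolding N_def by (rule card_neighbours_remove_edge[OF assms(1,3)])
  ultimately have "k \<le> card (N - {a})"
    using k assms(7) by (simp add: card_Diff_singleton)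
  then obtain T' where T': "T' \<subseteq> N - {a}" "card T' = k" "finite T'"
    by (rule obtain_subset_with_card_n)
  define T where "T = insert a T'"
  have "a \<notin> T'"
    using T'(1) by blast
  then have "T \<subseteq> N" "T - {a} = T'" "card T = Suc k"
    using T' \<open>a \<in> N\<close> by (auto simp: T_def)
  then have TS: "T \<subseteq> V - {y, z}" "T - {a} \<subseteq> V - {y, z}"
    and Ty: "{w\<in>T. E y w} = T" "{w\<in>T - {a}. E y w} = T'"
    by (auto simp: N_def)
  have z_T: "\<kappa> z \<le> int (card {w\<in>T. E z w})"
    using swap_stableD(1)[OF assms(2,3) TS(1)] Ty(1) \<open>card T = Suc k\<close> k by simp
  have z_T_a: "\<not> \<kappa> z \<le> int (card {w\<in>T - {a}. E z w})"
    using swap_stableD(1)[OF assms(2,3) TS(2)] Ty(2) T'(2) k by simp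
  have "E z a"
  proof (rule ccontr)
    assume "\<not> E z a"
    then have "{w\<in>T. E z w} = {w\<in>T - {a}. E z w}"
      by blast
    with z_T z_T_a show False
      by simp
  qed
  moreover have "card {w\<in>T. E z w} \<le> card T"
    using T'(3) by (intro card_mono) (auto simp: T_def)
  ultimately show ?thesis
    using z_T \<open>card T = Suc k\<close> k by simp
qed

lemma swap_stable_closed_neighbourhood_eq:
  assumes "simple_graph V E" "swap_stable V E c \<kappa>" "E y z"
    and bounds: "\<forall>u\<in>V. 1 \<le> \<kappa> u \<and> \<kappa> u < int (degree V E u)"
  shows "insert y {w\<in>V. E y w} = insert z {w\<in>V. E z w} \<and> \<kappa> y = \<kappa> z"
proof -
  have other_neighbour: "\<exists>a. E y' a \<and> a \<noteq> z'" if "E y' z'" for y' z'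
  proof -
    have "y' \<in> V"
      using simple_graphD(2)[OF assms(1) that] .
    then have "card {w\<in>V - {y', z'}. E y' w} \<noteq> 0"
      using card_neighbours_remove_edge[OF assms(1) that] bounds by force
    then obtain a where "a \<in> {w\<in>V - {y', z'}. E y' w}"
      by (metis card.empty ex_in_conv)
    then show ?thesis
      by blast
  qed
  from \<open>E y z\<close> have "E z y"
    by (rule simple_graphD(4)[OF assms(1)])
  have "y \<in> V" "z \<in> V"
    using simple_graphD(2,3)[OF assms(1) \<open>E y z\<close>] .
  have yz: "E z a \<and> \<kappa> z \<le> \<kappa> y" if "E y a" "a \<noteq> z" for a
    using swap_stable_common_neighbour[OF assms(1,2) \<open>E y z\<close> that] bounds \<open>y \<in> V\<close> by blast
  have zy: "E y a \<and> \<kappa> y \<le> \<kappa> z" if "E z a" "a \<noteq> y" for a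
    using swap_stable_common_neighbour[OF assms(1,2) \<open>E z y\<close> that] bounds \<open>z \<in> V\<close> by blast
  have "\<kappa> y = \<kappa> z"
    using other_neighbour[OF \<open>E y z\<close>] other_neighbour[OF \<open>E z y\<close>] yz zy by force
  moreover have "insert y {w\<in>V. E y w} = insert z {w\<in>V. E z w}"
    using yz zy \<open>E y z\<close> \<open>E z y\<close> \<open>y \<in> V\<close> \<open>z \<in> V\<close> simple_graphD(3)[OF assms(1)] by blast
  ultimately show ?thesis
    by blast
qed

lemma swap_stable_clique:
  assumes "simple_graph V E" "graph_connected V E" "swap_stable V E c \<kappa>"
    and "\<forall>u\<in>V. 1 \<le> \<kappa> u \<and> \<kappa> u < int (degree V E u)"
  shows "(\<forall>u\<in>V. \<forall>v\<in>V. u \<noteq> v \<longrightarrow> E u v) \<and> (\<forall>u\<in>V. \<forall>v\<in>V. \<kappa> u = \<kappa> v)"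
proof (cases "V = {}")
  case True
  then show ?thesis by simp
next
  case False
  then obtain u0 where "u0 \<in> V"
    by blast
  have same: "insert u {w\<in>V. E u w} = insert u0 {w\<in>V. E u0 w} \<and> \<kappa> u = \<kappa> u0" if "u \<in> V" for u
    by (rule graph_connected_propagate[OF assms(1,2) \<open>u0 \<in> V\<close> _ _ that])
      (use swap_stable_closed_neighbourhood_eq[OF assms(1,3) _ assms(4)] in auto)
  have "E u v" if "u \<in> V" "v \<in> V" "u \<noteq> v" for u v
  proof -
    have "v \<in> insert u {w\<in>V. E u w}"
      using same[OF \<open>u \<in> V\<close>] same[OF \<open>v \<in> V\<close>] by blast
    then show ?thesis
      using \<open>u \<noteq> v\<close> by blast
  qed
  moreover have "\<kappa> u = \<kappa> v" if "u \<in> V" "v \<in> V" for u v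
    using same that by metis
  ultimately show ?thesis
    by blast
qed

lemma swap_stable_cases:
  assumes "simple_graph V E" "graph_connected V E" "swap_stable V E c \<kappa>"
    and bounds: "\<forall>u\<in>V. 0 \<le> \<kappa> u \<and> \<kappa> u \<le> int (degree V E u)"
  shows "(\<forall>u\<in>V. \<kappa> u = int (degree V E u))
    \<or> ((\<forall>u\<in>V. \<forall>v\<in>V. c u = c v) \<and> (\<forall>u\<in>V. \<kappa> u = 0))
    \<or> ((\<forall>u\<in>V. \<forall>v\<in>V. u \<noteq> v \<longrightarrow> E u v) \<and> (\<forall>u\<in>V. \<forall>v\<in>V. c u = c v)
        \<and> (\<forall>u\<in>V. \<forall>v\<in>V. \<kappa> u = \<kappa> v)
        \<and> (\<forall>u\<in>V. 0 < \<kappa> u \<and> \<kappa> u < int (degree V E u)))"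
proof -
  consider (zero) u0 where "u0 \<in> V" "\<kappa> u0 = 0"
    | (saturated) "\<forall>u\<in>V. \<kappa> u = int (degree V E u)"
    | (between) u0 where "u0 \<in> V" "\<kappa> u0 < int (degree V E u0)" "\<forall>u\<in>V. 1 \<le> \<kappa> u"
    using bounds by force
  then show ?thesis
  proof cases
    case zero
    then have "\<kappa> u = 0 \<and> c u = c u0" if "u \<in> V" for u
      using swap_stable_kappa_zero[OF assms(1-3) _ zero that] bounds by blast
    then show ?thesis
      by auto
  next
    case saturated
    then show ?thesis
      by blast
  next
    case between
    have less: "\<kappa> u < int (degree V E u) \<and> c u = c u0" if "u \<in> V" for u
      by (rule swap_stable_kappa_less_degree[OF assms(1-3) between(1,2) that])
    then have "\<forall>u\<in>V. 1 \<le> \<kappa> u \<and> \<kappa> u < int (degree V E u)"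
      using between(3) by blast
    then have "(\<forall>u\<in>V. \<forall>v\<in>V. u \<noteq> v \<longrightarrow> E u v) \<and> (\<forall>u\<in>V. \<forall>v\<in>V. \<kappa> u = \<kappa> v)"
      by (rule swap_stable_clique[OF assms(1-3)])
    moreover have "\<forall>u\<in>V. \<forall>v\<in>V. c u = c v"
      using less by metis
    moreover have "\<forall>u\<in>V. 0 < \<kappa> u \<and> \<kappa> u < int (degree V E u)"
      using less between(3) by force
    ultimately show ?thesis
      by blast
  qed
qed

lemma ordering_cost_eq_0:
  assumes "finite V" "set xs \<subseteq> V" "\<forall>u\<in>V. int (degree V E u) \<le> \<kappa> u"
  shows "ordering_cost V E c \<kappa> xs = 0"
proof -
  have "max 0 (real (back_degree E xs u) - of_int (\<kappa> u)) = 0" if "u \<in> V" for u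
    using back_degree_le_degree[OF assms(1,2), of E u] assms(3) that by force
  then show ?thesis
    unfolding ordering_cost_def by simp
qed

lemma sum_back_degree:
  assumes "simple_graph V E" "xs \<in> permutations_of_set V"
  shows "2 * (\<Sum>u\<in>V. back_degree E xs u) = (\<Sum>u\<in>V. degree V E u)"
proof -
  have "finite V" "distinct xs" "set xs = V"
    using simple_graphD(1)[OF assms(1)] assms(2) by (auto simp: permutations_of_set_def)
  define L where "L = Sigma V (\<lambda>u. {v\<in>V. E u v \<and> list_index xs v < list_index xs u})"
  define D where "D = Sigma V (\<lambda>u. {v\<in>V. E u v})"
  have "card L = (\<Sum>u\<in>V. back_degree E xs u)"
    unfolding L_def back_degree_def using \<open>finite V\<close> \<open>set xs = V\<close> by (simp add: card_SigmaI)
  moreover have "card D = (\<Sum>u\<in>V. degree V E u)"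
    unfolding D_def degree_def using \<open>finite V\<close> by (simp add: card_SigmaI)
  moreover have "D = L \<union> prod.swap ` L"
  proof
    show "L \<union> prod.swap ` L \<subseteq> D"
      using simple_graphD(4)[OF assms(1)] by (auto simp: L_def D_def)
    show "D \<subseteq> L \<union> prod.swap ` L"
    proof
      fix p assume "p \<in> D"
      then obtain a b where p: "p = (a, b)" "a \<in> V" "b \<in> V" "E a b"
        by (auto simp: D_def)
      then have "a \<noteq> b"
        using simple_graphD(5)[OF assms(1)] by blast
      then have "list_index xs a \<noteq> list_index xs b"
        using inj_on_list_index[of xs] p \<open>set xs = V\<close> by (metis inj_on_eq_iff)
      then show "p \<in> L \<union> prod.swap ` L"
        using p simple_graphD(4)[OF assms(1)] by (auto simp: L_def linorder_neq_iff)
    qed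
  qed
  moreover have "L \<inter> prod.swap ` L = {}"
    by (auto simp: L_def)
  moreover have "card (prod.swap ` L) = card L"
    by (simp add: card_image)
  moreover have "finite L"
    using \<open>finite V\<close> by (simp add: L_def)
  ultimately show ?thesis
    by (simp add: card_Un_disjoint)
qed

lemma ordering_cost_kappa_zero:
  assumes "simple_graph V E" "xs \<in> permutations_of_set V" "\<forall>u\<in>V. c u = c0 \<and> \<kappa> u = 0"
  shows "ordering_cost V E c \<kappa> xs = c0 * real (\<Sum>u\<in>V. degree V E u) / 2"
proof -
  have "ordering_cost V E c \<kappa> xs = (\<Sum>u\<in>V. c0 * real (back_degree E xs u))"
    unfolding ordering_cost_def using assms(3) by (intro sum.cong) auto
  also have "\<dots> = c0 * real (\<Sum>u\<in>V. back_degree E xs u)"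
    by (simp add: sum_distrib_left)
  also have "\<dots> = c0 * real (\<Sum>u\<in>V. degree V E u) / 2"
    using arg_cong[OF sum_back_degree[OF assms(1,2)], of real] by simp
  finally show ?thesis .
qed

lemma ordering_cost_clique:
  assumes "\<forall>u\<in>V. \<forall>v\<in>V. u \<noteq> v \<longrightarrow> E u v" "xs \<in> permutations_of_set V"
    and "\<forall>u\<in>V. c u = c0 \<and> \<kappa> u = k"
  shows "ordering_cost V E c \<kappa> xs = (\<Sum>i<card V. c0 * max 0 (real i - of_int k))"
proof -
  have xs: "distinct xs" "set xs = V"
    using assms(2) by (auto simp: permutations_of_set_def)
  have back_degree_index: "back_degree E xs (xs ! i) = i" if "i < length xs" for i
  proof -
    have "distinct (take i xs @ xs ! i # drop (Suc i) xs)"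
      using xs(1) that by (simp add: id_take_nth_drop[symmetric])
    then have "xs ! i \<notin> set (take i xs)"
      by simp
    moreover have "set (take i xs) \<subseteq> V" "xs ! i \<in> V"
      using xs that by (auto dest: in_set_takeD)
    ultimately have "E (xs ! i) v" if "v \<in> set (take i xs)" for v
      using assms(1) that by (metis subsetD)
    then have "{v \<in> set (take i xs). E (xs ! i) v} = set (take i xs)"
      by blast
    then show ?thesis
      using back_degree_nth[OF xs(1) that] xs(1) that by (simp add: distinct_card)
  qed
  let ?f = "\<lambda>u. c u * max 0 (real (back_degree E xs u) - of_int (\<kappa> u))"
  have "ordering_cost V E c \<kappa> xs = (\<Sum>i<length xs. ?f (xs ! i))"
    unfolding ordering_cost_def
    using sum.reindex_bij_betw[OF bij_betw_nth[OF xs(1) refl xs(2)[symmetric]], of ?f] by simp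
  also have "\<dots> = (\<Sum>i<length xs. c0 * max 0 (real i - of_int k))"
    using back_degree_index assms(3) xs by (intro sum.cong) auto
  also have "length xs = card V"
    using xs distinct_card by metis
  finally show ?thesis .
qed

lemma ordering_cost_constant_if_cases:
  assumes "simple_graph V E"
    and "(\<forall>u\<in>V. \<kappa> u = int (degree V E u))
    \<or> ((\<forall>u\<in>V. \<forall>v\<in>V. c u = c v) \<and> (\<forall>u\<in>V. \<kappa> u = 0))
    \<or> ((\<forall>u\<in>V. \<forall>v\<in>V. u \<noteq> v \<longrightarrow> E u v) \<and> (\<forall>u\<in>V. \<forall>v\<in>V. c u = c v)
        \<and> (\<forall>u\<in>V. \<forall>v\<in>V. \<kappa> u = \<kappa> v))"
  shows "\<forall>xs\<in>permutations_of_set V. \<forall>ys\<in>permutations_of_set V.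
      ordering_cost V E c \<kappa> xs = ordering_cost V E c \<kappa> ys"
proof -
  have "\<exists>K. \<forall>xs\<in>permutations_of_set V. ordering_cost V E c \<kappa> xs = K"
  proof (cases "V = {}")
    case True
    then show ?thesis
      by (simp add: ordering_cost_def)
  next
    case False
    then obtain u0 where "u0 \<in> V"
      by blast
    from assms(2) consider
        (saturated) "\<forall>u\<in>V. \<kappa> u = int (degree V E u)"
      | (zero) "\<forall>u\<in>V. c u = c u0 \<and> \<kappa> u = 0"
      | (clique) "\<forall>u\<in>V. \<forall>v\<in>V. u \<noteq> v \<longrightarrow> E u v" "\<forall>u\<in>V. c u = c u0 \<and> \<kappa> u = \<kappa> u0"
      using \<open>u0 \<in> V\<close> by metis
    then show ?thesis
    proof cases
      case saturated
      then show ?thesis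
        using ordering_cost_eq_0[OF simple_graphD(1)[OF assms(1)]]
        by (metis order_refl permutations_of_setD(1))
    next
      case zero
      then show ?thesis
        using ordering_cost_kappa_zero[OF assms(1)] by blast
    next
      case clique
      then show ?thesis
        using ordering_cost_clique by blast
    qed
  qed
  then show ?thesis
    by metis
qed

lemma ordering_cost_constant_iff:
  assumes "simple_graph V E" "graph_connected V E" "\<forall>u\<in>V. 0 < c u"
    and "\<forall>u\<in>V. 0 \<le> \<kappa> u \<and> \<kappa> u \<le> int (degree V E u)"
  shows "(\<forall>xs\<in>permutations_of_set V. \<forall>ys\<in>permutations_of_set V.
        ordering_cost V E c \<kappa> xs = ordering_cost V E c \<kappa> ys)
    \<longleftrightarrow>
      (\<forall>u\<in>V. \<kappa> u = int (degree V E u))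
    \<or> ((\<forall>u\<in>V. \<forall>v\<in>V. c u = c v) \<and> (\<forall>u\<in>V. \<kappa> u = 0))
    \<or> ((\<forall>u\<in>V. \<forall>v\<in>V. u \<noteq> v \<longrightarrow> E u v) \<and> (\<forall>u\<in>V. \<forall>v\<in>V. c u = c v)
        \<and> (\<forall>u\<in>V. \<forall>v\<in>V. \<kappa> u = \<kappa> v)
        \<and> (\<forall>u\<in>V. 0 < \<kappa> u \<and> \<kappa> u < int (degree V E u)))"
    (is "?constant \<longleftrightarrow> ?cases")
proof
  assume ?constant
  then have "swap_stable V E c \<kappa>"
    by (rule swap_stable_if_ordering_cost_constant[OF assms(1,3)])
  then show ?cases
    by (rule swap_stable_cases[OF assms(1,2) _ assms(4)])
next
  assume ?cases
  then show ?constant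
    by (intro ordering_cost_constant_if_cases[OF assms(1)]) blast
qed

theorem theorem3:
  fixes V :: "'a set" and E :: "'a \<Rightarrow> 'a \<Rightarrow> bool"
    and c :: "'a \<Rightarrow> real" and \<kappa> :: "'a \<Rightarrow> int"
  assumes "simple_graph V E" and "graph_connected V E"
    and "\<forall>u\<in>V. c u > 0"
    and "\<forall>u\<in>V. 0 \<le> \<kappa> u \<and> \<kappa> u \<le> int (degree V E u)"
  shows "beta V E c \<kappa> =
      (\<Sum>u\<in>V. c u * of_int (int (degree V E u) - \<kappa> u) * of_int (int (degree V E u) - \<kappa> u + 1)
               / (2 * (real (degree V E u) + 1)))
    \<longleftrightarrow>
      (\<forall>u\<in>V. \<kappa> u = int (degree V E u))
    \<or> ((\<forall>u\<in>V. \<forall>v\<in>V. c u = c v) \<and> (\<forall>u\<in>V. \<kappa> u = 0))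
    \<or> ((\<forall>u\<in>V. \<forall>v\<in>V. u \<noteq> v \<longrightarrow> E u v) \<and> (\<forall>u\<in>V. \<forall>v\<in>V. c u = c v)
        \<and> (\<forall>u\<in>V. \<forall>v\<in>V. \<kappa> u = \<kappa> v)
        \<and> (\<forall>u\<in>V. 0 < \<kappa> u \<and> \<kappa> u < int (degree V E u)))"
  unfolding beta_eq_iff_ordering_cost_constant[OF assms(1,3,4)]
  by (rule ordering_cost_constant_iff[OF assms])

end
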